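(* For all loop-free hybrid programs $A,B$ and every set of variables $H$: if $FV(A)\cup FV(B)\subseteq H$ and $A\equiv_H B$, then $A^*\equiv_H B^*$.
   Context: Hybrid programs and their transition semantics $[\![\cdot]\!]$ are as in differential dynamic logic ($x:=\theta$, $x:=*$, $?\phi$, $x'=\theta\,\&\,Q$, $;$, $\cup$, $^*$); a program is loop-free if it contains no $^*$. $FV(\alpha)$ is the standard $d\mathcal{L}$ set of free variables of $\alpha$ (variables whose initial value may be read by $\alpha$). States $\sigma,\sigma'$ satisfy $\sigma\approx_H\sigma'$ iff they agree on every variable in $H$. For loop-free programs, $\alpha\equiv_H\beta$ iff for all states $\sigma_0,\sigma_1$ with $(\sigma_0,\sigma_1)\in[\![\alpha]\!]$ there exist $\sigma'_0,\sigma'_1$ with $(\sigma'_0,\sigma'_1)\in[\![\beta]\!]$, $\sigma_0\approx_H\sigma'_0$ and $\sigma_1\approx_H\sigma'_1$, and symmetrically with $\alpha,\beta$ exchanged. For loops (lock-step equivalence), $\alpha^*\equiv_H\beta^*$ iff for every $n\in\mathbb{N}$ and all states $\sigma_0,\dots,\sigma_n$ with $(\sigma_i,\sigma_{i+1})\in[\![\alpha]\!]$ for all $i<n$, there exist states $\sigma'_0,\dots,\sigma'_n$ with $(\sigma'_j,\sigma'_{j+1})\in[\![\beta]\!]$ for all $j<n$ and $\sigma_k\approx_H\sigma'_k$ for all $k\le n$; and symmetrically with $\alpha,\beta$ exchanged. *)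

theory Defs
  imports "HOL-Analysis.Analysis"
begin

type_synonym 'v state = "'v \<Rightarrow> real"

datatype 'v trm =
    Var 'v
  | Const real
  | Neg "'v trm"
  | Plus "'v trm" "'v trm"
  | Times "'v trm" "'v trm"

datatype 'v fml =
    Geq "'v trm" "'v trm"
  | Not "'v fml"
  | And "'v fml" "'v fml"
  | Exists 'v "'v fml"
  | Box "'v hp" "'v fml"
and 'v hp =
    Assign 'v "'v trm"
  | AssignAny 'v
  | Test "'v fml"
  | ODE "('v \<times> 'v trm) list" "'v fml"  (* x1'=\<theta>1,...,xn'=\<theta>n & Q *)
  | Seq "'v hp" "'v hp"
  | Choice "'v hp" "'v hp"
  | Loop "'v hp"

fun tsem :: "'v trm \<Rightarrow> 'v state \<Rightarrow> real" where
  "tsem (Var x) s = s x"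
| "tsem (Const c) s = c"
| "tsem (Neg t) s = - tsem t s"
| "tsem (Plus t u) s = tsem t s + tsem u s"
| "tsem (Times t u) s = tsem t s * tsem u s"

fun fsem :: "'v fml \<Rightarrow> 'v state set"
and psem :: "'v hp \<Rightarrow> ('v state \<times> 'v state) set" where
  "fsem (Geq t u) = {s. tsem t s \<ge> tsem u s}"
| "fsem (Not p) = - fsem p"
| "fsem (And p q) = fsem p \<inter> fsem q"
| "fsem (Exists x p) = {s. \<exists>r. s(x := r) \<in> fsem p}"
| "fsem (Box a p) = {s. \<forall>s'. (s, s') \<in> psem a \<longrightarrow> s' \<in> fsem p}"
| "psem (Assign x t) = {(s, s(x := tsem t s)) | s. True}"
| "psem (AssignAny x) = {(s, s(x := r)) | s r. True}"
| "psem (Test p) = {(s, s) | s. s \<in> fsem p}"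
| "psem (ODE eqs Q) = {(s, s') | s s'. \<exists>(r::real) (\<phi>::real \<Rightarrow> 'v state).
       0 \<le> r \<and> \<phi> 0 = s \<and> \<phi> r = s' \<and>
       (\<forall>t\<in>{0..r}. \<phi> t \<in> fsem Q) \<and>
       (\<forall>t\<in>{0..r}. \<forall>(x, \<theta>)\<in>set eqs.
           ((\<lambda>\<tau>. \<phi> \<tau> x) has_real_derivative tsem \<theta> (\<phi> t)) (at t within {0..r})) \<and>
       (\<forall>t\<in>{0..r}. \<forall>y. y \<notin> fst ` set eqs \<longrightarrow> \<phi> t y = s y)}"
| "psem (Seq a b) = psem a O psem b"
| "psem (Choice a b) = psem a \<union> psem b"
| "psem (Loop a) = (psem a)\<^sup>*"

fun tFV :: "'v trm \<Rightarrow> 'v set" where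
  "tFV (Var x) = {x}"
| "tFV (Const c) = {}"
| "tFV (Neg t) = tFV t"
| "tFV (Plus t u) = tFV t \<union> tFV u"
| "tFV (Times t u) = tFV t \<union> tFV u"

fun MBV :: "'v hp \<Rightarrow> 'v set" where
  "MBV (Assign x t) = {x}"
| "MBV (AssignAny x) = {x}"
| "MBV (Test p) = {}"
| "MBV (ODE eqs Q) = fst ` set eqs"
| "MBV (Seq a b) = MBV a \<union> MBV b"
| "MBV (Choice a b) = MBV a \<inter> MBV b"
| "MBV (Loop a) = {}"

fun fFV :: "'v fml \<Rightarrow> 'v set"
and FV :: "'v hp \<Rightarrow> 'v set" where
  "fFV (Geq t u) = tFV t \<union> tFV u"
| "fFV (Not p) = fFV p"
| "fFV (And p q) = fFV p \<union> fFV q"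
| "fFV (Exists x p) = fFV p - {x}"
| "fFV (Box a p) = FV a \<union> (fFV p - MBV a)"
| "FV (Assign x t) = tFV t"
| "FV (AssignAny x) = {}"
| "FV (Test p) = fFV p"
| "FV (ODE eqs Q) = fst ` set eqs \<union> (\<Union>(x, \<theta>)\<in>set eqs. tFV \<theta>) \<union> fFV Q"
| "FV (Seq a b) = FV a \<union> (FV b - MBV a)"
| "FV (Choice a b) = FV a \<union> FV b"
| "FV (Loop a) = FV a"

fun loop_free :: "'v hp \<Rightarrow> bool" where
  "loop_free (Assign x t) = True"
| "loop_free (AssignAny x) = True"
| "loop_free (Test p) = True"
| "loop_free (ODE eqs Q) = True"
| "loop_free (Seq a b) = (loop_free a \<and> loop_free b)"
| "loop_free (Choice a b) = (loop_free a \<and> loop_free b)"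
| "loop_free (Loop a) = False"

definition agree :: "'v set \<Rightarrow> 'v state \<Rightarrow> 'v state \<Rightarrow> bool" where
  "agree H s s' \<longleftrightarrow> (\<forall>x\<in>H. s x = s' x)"

definition sim_H :: "'v set \<Rightarrow> 'v hp \<Rightarrow> 'v hp \<Rightarrow> bool" where
  "sim_H H a b \<longleftrightarrow> (\<forall>s0 s1. (s0, s1) \<in> psem a \<longrightarrow>
      (\<exists>s0' s1'. (s0', s1') \<in> psem b \<and> agree H s0 s0' \<and> agree H s1 s1'))"

definition equiv_H :: "'v set \<Rightarrow> 'v hp \<Rightarrow> 'v hp \<Rightarrow> bool" where
  "equiv_H H a b \<longleftrightarrow> sim_H H a b \<and> sim_H H b a"

definition lockstep_sim_H :: "'v set \<Rightarrow> 'v hp \<Rightarrow> 'v hp \<Rightarrow> bool" where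
  "lockstep_sim_H H a b \<longleftrightarrow> (\<forall>(n::nat) (\<sigma>::nat \<Rightarrow> 'v state).
      (\<forall>i<n. (\<sigma> i, \<sigma> (Suc i)) \<in> psem a) \<longrightarrow>
      (\<exists>\<sigma>'::nat \<Rightarrow> 'v state. (\<forall>j<n. (\<sigma>' j, \<sigma>' (Suc j)) \<in> psem b) \<and>
                            (\<forall>k\<le>n. agree H (\<sigma> k) (\<sigma>' k))))"

text \<open>Lock-step equivalence of loops a* and b*.\<close>
definition loop_equiv_H :: "'v set \<Rightarrow> 'v hp \<Rightarrow> 'v hp \<Rightarrow> bool" where
  "loop_equiv_H H a b \<longleftrightarrow> lockstep_sim_H H a b \<and> lockstep_sim_H H b a"

end

theory Submission
  imports Defs
begin

text \<open>By the coincidence lemma of dL, whether a program can run from a state, and where it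
  can end up on \<open>H\<close>, depends only on the values of its free variables. Hence, when
  \<open>FV B \<subseteq> H\<close>, a \<open>B\<close>-step that \<open>A \<equiv>\<^sub>H B\<close> provides from some state \<open>H\<close>-agreeing with the current
  one can be replayed from the current state itself. Replaying one step after the other turns
  every \<open>A\<close>-run into an \<open>H\<close>-agreeing \<open>B\<close>-run of the same length.\<close>

lemma agree_refl: "agree V s s"
  by (simp add: agree_def)

lemma agree_sym: "agree V s t \<Longrightarrow> agree V t s"
  by (auto simp: agree_def)

lemma agree_trans: "agree V s t \<Longrightarrow> agree V t u \<Longrightarrow> agree V s u"
  by (auto simp: agree_def)

lemma agree_mono: "agree V s t \<Longrightarrow> W \<subseteq> V \<Longrightarrow> agree W s t"
  by (auto simp: agree_def)

lemma agree_Un_iff: "agree (V \<union> W) s t \<longleftrightarrow> agree V s t \<and> agree W s t"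
  by (auto simp: agree_def)

lemma tsem_coincidence: "tFV \<theta> \<subseteq> V \<Longrightarrow> agree V s t \<Longrightarrow> tsem \<theta> s = tsem \<theta> t"
  by (induction \<theta>) (auto simp: agree_def)

definition coincidence_fml :: "'v fml \<Rightarrow> bool" where
  "coincidence_fml p \<longleftrightarrow>
     (\<forall>V s t. fFV p \<subseteq> V \<longrightarrow> agree V s t \<longrightarrow> (s \<in> fsem p \<longleftrightarrow> t \<in> fsem p))"

definition coincidence_hp :: "'v hp \<Rightarrow> bool" where
  "coincidence_hp a \<longleftrightarrow>
     (\<forall>V s t s'. FV a \<subseteq> V \<longrightarrow> agree V s t \<longrightarrow> (s, s') \<in> psem a \<longrightarrow>
        (\<exists>t'. (t, t') \<in> psem a \<and> agree (V \<union> MBV a) s' t'))"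

lemma coincidence_fmlI:
  assumes "\<And>V s t. fFV p \<subseteq> V \<Longrightarrow> agree V s t \<Longrightarrow> s \<in> fsem p \<Longrightarrow> t \<in> fsem p"
  shows "coincidence_fml p"
  unfolding coincidence_fml_def using assms agree_sym by metis

lemma coincidence_fmlD:
  "coincidence_fml p \<Longrightarrow> fFV p \<subseteq> V \<Longrightarrow> agree V s t \<Longrightarrow> s \<in> fsem p \<longleftrightarrow> t \<in> fsem p"
  unfolding coincidence_fml_def by blast

lemma coincidence_hpD:
  assumes "coincidence_hp a" "FV a \<subseteq> V" "agree V s t" "(s, s') \<in> psem a"
  obtains t' where "(t, t') \<in> psem a" "agree (V \<union> MBV a) s' t'"
  using assms unfolding coincidence_hp_def by blast

lemma coincidence_Geq: "coincidence_fml (Geq \<theta> \<eta>)"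
proof (rule coincidence_fmlI)
  fix V s t assume "fFV (Geq \<theta> \<eta>) \<subseteq> V" "agree V s t"
  then have "tsem \<theta> s = tsem \<theta> t" "tsem \<eta> s = tsem \<eta> t"
    using tsem_coincidence by auto
  then show "s \<in> fsem (Geq \<theta> \<eta>) \<Longrightarrow> t \<in> fsem (Geq \<theta> \<eta>)" by simp
qed

lemma coincidence_Not: "coincidence_fml p \<Longrightarrow> coincidence_fml (Not p)"
  unfolding coincidence_fml_def by simp

lemma coincidence_And:
  "coincidence_fml p \<Longrightarrow> coincidence_fml q \<Longrightarrow> coincidence_fml (And p q)"
  unfolding coincidence_fml_def by fastforce

lemma coincidence_Exists: "coincidence_fml p \<Longrightarrow> coincidence_fml (Exists x p)"
proof (rule coincidence_fmlI)
  fix V s t assume p: "coincidence_fml p" and "fFV (Exists x p) \<subseteq> V" "agree V s t"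
  then have "fFV p \<subseteq> V \<union> {x}" "\<And>r. agree (V \<union> {x}) (s(x := r)) (t(x := r))"
    by (auto simp: agree_def)
  then have "s(x := r) \<in> fsem p \<longleftrightarrow> t(x := r) \<in> fsem p" for r
    using coincidence_fmlD[OF p] by blast
  then show "s \<in> fsem (Exists x p) \<Longrightarrow> t \<in> fsem (Exists x p)" by auto
qed

lemma coincidence_Box:
  assumes a: "coincidence_hp a" and p: "coincidence_fml p"
  shows "coincidence_fml (Box a p)"
proof (rule coincidence_fmlI)
  fix V s t assume "fFV (Box a p) \<subseteq> V" and st: "agree V s t" and box: "s \<in> fsem (Box a p)"
  then have fv_a: "FV a \<subseteq> V" and fv_p: "fFV p \<subseteq> V \<union> MBV a" by auto
  show "t \<in> fsem (Box a p)"
  proof (clarsimp)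
    fix t' assume "(t, t') \<in> psem a"
    then obtain s' where "(s, s') \<in> psem a" "agree (V \<union> MBV a) t' s'"
      using coincidence_hpD[OF a fv_a agree_sym[OF st]] by blast
    then show "t' \<in> fsem p"
      using box coincidence_fmlD[OF p fv_p] by auto
  qed
qed

lemma coincidence_Assign: "coincidence_hp (Assign x \<theta>)"
  unfolding coincidence_hp_def
  by (auto simp: agree_def intro: tsem_coincidence[unfolded agree_def])

lemma coincidence_AssignAny: "coincidence_hp (AssignAny x)"
  unfolding coincidence_hp_def by (auto simp: agree_def)

lemma coincidence_Test: "coincidence_fml p \<Longrightarrow> coincidence_hp (Test p)"
  unfolding coincidence_hp_def coincidence_fml_def by auto

lemma coincidence_ODE:
  assumes Q: "coincidence_fml Q"
  shows "coincidence_hp (ODE eqs Q)"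
  unfolding coincidence_hp_def
proof (intro allI impI)
  fix V s t s' assume fv: "FV (ODE eqs Q) \<subseteq> V" and st: "agree V s t"
    and "(s, s') \<in> psem (ODE eqs Q)"
  let ?X = "fst ` set eqs"
  obtain r \<phi> where r: "0 \<le> r" "\<phi> 0 = s" "\<phi> r = s'"
    and dom: "\<forall>\<tau>\<in>{0..r}. \<phi> \<tau> \<in> fsem Q"
    and deriv: "\<forall>\<tau>\<in>{0..r}. \<forall>(x, \<theta>)\<in>set eqs.
         ((\<lambda>\<tau>'. \<phi> \<tau>' x) has_real_derivative tsem \<theta> (\<phi> \<tau>)) (at \<tau> within {0..r})"
    and frozen: "\<forall>\<tau>\<in>{0..r}. \<forall>y. y \<notin> ?X \<longrightarrow> \<phi> \<tau> y = s y"
    using \<open>(s, s') \<in> psem (ODE eqs Q)\<close> by auto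
  define \<psi> where "\<psi> = (\<lambda>\<tau> y. if y \<in> ?X then \<phi> \<tau> y else t y)"
  have fv_X: "?X \<subseteq> V" and fv_Q: "fFV Q \<subseteq> V"
    and fv_rhs: "\<And>x \<theta>. (x, \<theta>) \<in> set eqs \<Longrightarrow> tFV \<theta> \<subseteq> V"
    using fv by auto
  have \<phi>\<psi>: "agree V (\<phi> \<tau>) (\<psi> \<tau>)" if "\<tau> \<in> {0..r}" for \<tau>
    using frozen that st fv_X by (auto simp: agree_def \<psi>_def)
  have "\<psi> 0 = t"
    using r(2) st fv_X by (auto simp: \<psi>_def agree_def fun_eq_iff)
  moreover have "\<forall>\<tau>\<in>{0..r}. \<psi> \<tau> \<in> fsem Q"
    using dom \<phi>\<psi> coincidence_fmlD[OF Q fv_Q] by blast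
  moreover have "\<forall>\<tau>\<in>{0..r}. \<forall>(x, \<theta>)\<in>set eqs.
      ((\<lambda>\<tau>'. \<psi> \<tau>' x) has_real_derivative tsem \<theta> (\<psi> \<tau>)) (at \<tau> within {0..r})"
  proof (intro ballI, clarify)
    fix \<tau> x \<theta> assume \<tau>: "\<tau> \<in> {0..r}" and eq: "(x, \<theta>) \<in> set eqs"
    have "(\<lambda>\<tau>'. \<psi> \<tau>' x) = (\<lambda>\<tau>'. \<phi> \<tau>' x)"
      using eq by (force simp: \<psi>_def)
    moreover have "tsem \<theta> (\<psi> \<tau>) = tsem \<theta> (\<phi> \<tau>)"
      using tsem_coincidence[OF fv_rhs[OF eq] \<phi>\<psi>[OF \<tau>]] by simp
    ultimately show "((\<lambda>\<tau>'. \<psi> \<tau>' x) has_real_derivative tsem \<theta> (\<psi> \<tau>)) (at \<tau> within {0..r})"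
      using deriv \<tau> eq by auto
  qed
  moreover have "\<forall>\<tau>\<in>{0..r}. \<forall>y. y \<notin> ?X \<longrightarrow> \<psi> \<tau> y = t y"
    by (simp add: \<psi>_def)
  ultimately have "(t, \<psi> r) \<in> psem (ODE eqs Q)"
    using r(1) by (auto intro!: exI[of _ r] exI[of _ \<psi>])
  moreover have "agree (V \<union> MBV (ODE eqs Q)) s' (\<psi> r)"
    using \<phi>\<psi>[of r] r fv_X agree_mono by (auto simp: agree_Un_iff)
  ultimately show "\<exists>t'. (t, t') \<in> psem (ODE eqs Q) \<and> agree (V \<union> MBV (ODE eqs Q)) s' t'"
    by blast
qed

lemma coincidence_Seq:
  assumes a: "coincidence_hp a" and b: "coincidence_hp b"
  shows "coincidence_hp (Seq a b)"
  unfolding coincidence_hp_def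
proof (intro allI impI)
  fix V s t s' assume fv: "FV (Seq a b) \<subseteq> V" and st: "agree V s t"
    and "(s, s') \<in> psem (Seq a b)"
  then obtain w where sw: "(s, w) \<in> psem a" and ws': "(w, s') \<in> psem b" by auto
  obtain w' where "(t, w') \<in> psem a" "agree (V \<union> MBV a) w w'"
    using coincidence_hpD[OF a _ st sw] fv by auto
  moreover obtain t' where "(w', t') \<in> psem b" "agree (V \<union> MBV a \<union> MBV b) s' t'"
    using coincidence_hpD[OF b _ \<open>agree (V \<union> MBV a) w w'\<close> ws'] fv by auto
  ultimately show "\<exists>t'. (t, t') \<in> psem (Seq a b) \<and> agree (V \<union> MBV (Seq a b)) s' t'"
    by (auto simp: Un_assoc)
qed

lemma coincidence_Choice:
  assumes a: "coincidence_hp a" and b: "coincidence_hp b"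
  shows "coincidence_hp (Choice a b)"
  unfolding coincidence_hp_def
proof (intro allI impI)
  fix V s t s' assume fv: "FV (Choice a b) \<subseteq> V" and st: "agree V s t"
    and "(s, s') \<in> psem (Choice a b)"
  then consider "(s, s') \<in> psem a" | "(s, s') \<in> psem b" by auto
  then show "\<exists>t'. (t, t') \<in> psem (Choice a b) \<and> agree (V \<union> MBV (Choice a b)) s' t'"
  proof cases
    case 1
    with coincidence_hpD[OF a _ st] fv show ?thesis
      by simp (metis agree_mono Int_lower1 Un_mono subset_refl)
  next
    case 2
    with coincidence_hpD[OF b _ st] fv show ?thesis
      by simp (metis agree_mono Int_lower2 Un_mono subset_refl)
  qed
qed

lemma coincidence_Loop:
  assumes a: "coincidence_hp a"
  shows "coincidence_hp (Loop a)"
  unfolding coincidence_hp_def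
proof (intro allI impI)
  fix V s t s' assume fv: "FV (Loop a) \<subseteq> V" and st: "agree V s t"
    and "(s, s') \<in> psem (Loop a)"
  then have "(s, s') \<in> (psem a)\<^sup>*" by simp
  then have "\<exists>t'. (t, t') \<in> (psem a)\<^sup>* \<and> agree V s' t'"
  proof (induction rule: rtrancl_induct)
    case base
    then show ?case using st by blast
  next
    case (step y z)
    then obtain t' where "(t, t') \<in> (psem a)\<^sup>*" "agree V y t'" by blast
    moreover obtain t'' where "(t', t'') \<in> psem a" "agree (V \<union> MBV a) z t''"
      using coincidence_hpD[OF a _ \<open>agree V y t'\<close> step(2)] fv by auto
    ultimately show ?case
      by (meson agree_Un_iff rtrancl.rtrancl_into_rtrancl)
  qed
  then show "\<exists>t'. (t, t') \<in> psem (Loop a) \<and> agree (V \<union> MBV (Loop a)) s' t'"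
    by simp
qed

lemma coincidence:
  fixes p :: "'v fml" and a :: "'v hp"
  shows "coincidence_fml p" and "coincidence_hp a"
  by (induction p and a rule: fml.induct hp.induct)
     (auto intro: coincidence_Geq coincidence_Not coincidence_And coincidence_Exists
        coincidence_Box coincidence_Assign coincidence_AssignAny coincidence_Test
        coincidence_ODE coincidence_Seq coincidence_Choice coincidence_Loop)

lemma sim_H_step:
  assumes fv: "FV B \<subseteq> H" and sim: "sim_H H A B"
    and step: "(s, s') \<in> psem A" and st: "agree H s t"
  obtains t' where "(t, t') \<in> psem B" "agree H s' t'"
proof -
  obtain u u' where uu': "(u, u') \<in> psem B" and "agree H s u" and s'u': "agree H s' u'"
    using sim step unfolding sim_H_def by blast
  then have "agree H u t" using st agree_sym agree_trans by blast
  then obtain t' where "(t, t') \<in> psem B" "agree (H \<union> MBV B) u' t'"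
    using coincidence_hpD[OF coincidence(2) fv _ uu'] by blast
  then show ?thesis
    using that s'u' agree_trans agree_Un_iff by blast
qed

lemma lockstep_sim_H_if_sim_H:
  assumes fv: "FV B \<subseteq> H" and sim: "sim_H H A B"
  shows "lockstep_sim_H H A B"
  unfolding lockstep_sim_H_def
proof (intro allI impI)
  fix n \<sigma>
  assume "\<forall>i<n. (\<sigma> i, \<sigma> (Suc i)) \<in> psem A"
  then show "\<exists>\<sigma>'. (\<forall>j<n. (\<sigma>' j, \<sigma>' (Suc j)) \<in> psem B) \<and> (\<forall>k\<le>n. agree H (\<sigma> k) (\<sigma>' k))"
  proof (induction n)
    case 0
    show ?case using agree_refl by blast
  next
    case (Suc n)
    then obtain \<sigma>' where run: "\<forall>j<n. (\<sigma>' j, \<sigma>' (Suc j)) \<in> psem B"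
      and ag: "\<forall>k\<le>n. agree H (\<sigma> k) (\<sigma>' k)" by auto
    obtain t where "(\<sigma>' n, t) \<in> psem B" "agree H (\<sigma> (Suc n)) t"
      using sim_H_step[OF fv sim] Suc.prems ag by blast
    with run ag show ?case
      by (intro exI[of _ "\<sigma>'(Suc n := t)"]) (auto simp: le_Suc_eq less_Suc_eq)
  qed
qed

text \<open>The coincidence lemma holds for all programs.\<close>

theorem theorem2:
  fixes A B :: "'v hp" and H :: "'v set"
  assumes "loop_free A" and "loop_free B"
    and "FV A \<union> FV B \<subseteq> H"
    and "equiv_H H A B"
  shows "loop_equiv_H H A B"
  using assms lockstep_sim_H_if_sim_H unfolding loop_equiv_H_def equiv_H_def by auto

end
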